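(* Let $\mathcal{S}$ be the STAIR code with inside global parity symbols as defined in the context, so that every parity entry $X_{i_0,j_0}$ (with $(i_0,j_0)\in T$ or $j_0\ge n-m$) is a linear function $X_{i_0,j_0}=\sum c_{i,j}\,X_{i,j}$ of the entries at data positions $(i,j)$. Then $c_{i,j}\neq 0$ only if $i\le i_0$ and $j\le j_0$. Moreover, $c_{i,j}=0$ whenever $j\ne j_0$ and $h(j)=h(j_0)$ (columns spanned by the same tread), and $c_{i,j}=0$ whenever $i\ne i_0$ and $v(i)=v(i_0)$ (rows spanned by the same riser).
   Context: Parameters: integers $n,r,m,m'$ with $1\le m<n$, $1\le m'\le n-m$, and $\mathbf{e}=(e_0,\dots,e_{m'-1})$ with $0<e_0\le\cdots\le e_{m'-1}\le r$; $s=\sum_l e_l$. Field $\mathbb{F}=GF(2^w)$ with $n+m'\le 2^w$, $r+e_{m'-1}\le 2^w$. $\mathcal{C}_{row}$ is a systematic linear MDS $(n+m',n-m)$-code and $\mathcal{C}_{col}$ a systematic linear MDS $(r+e_{m'-1},r)$-code over $\mathbb{F}$ (length, dimension; systematic = codeword is the input symbols followed by parity symbols). Stair positions: $T=\{(i,\,n-m-m'+l): 0\le l\le m'-1,\ r-e_l\le i\le r-1\}$. Data positions: all $(i,j)$ with $j\le n-m-1$ and $(i,j)\notin T$. $\mathcal{S}$ is the set of $r\times n$ arrays $X$ over $\mathbb{F}$ for which there is an $r\times m'$ array $P'$ such that each row $(X_{i,0},\dots,X_{i,n-1},P'_{i,0},\dots,P'_{i,m'-1})$ is a codeword of $\mathcal{C}_{row}$,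 and for each $l$ the first $e_l$ of the $e_{m'-1}$ parity symbols of the $\mathcal{C}_{col}$-encoding of column $(P'_{0,l},\dots,P'_{r-1,l})$ are zero. The data entries determine $X\in\mathcal{S}$ uniquely and linearly. Define the parity height of column $j$: $h(j)=0$ for $j<n-m-m'$, $h(n-m-m'+l)=e_l$ for $0\le l\le m'-1$, and $h(j)=r$ for $j\ge n-m$. Define for row $i$: $v(i)=\#\{j: h(j)\ge r-i\}$, the number of parity positions in row $i$. *)

theory Defs
  imports Main
begin

definition vecs :: "nat \<Rightarrow> (nat \<Rightarrow> 'a::zero) set" where
  "vecs N = {v. \<forall>i\<ge>N. v i = 0}"

definition trunc :: "nat \<Rightarrow> (nat \<Rightarrow> 'a::zero) \<Rightarrow> nat \<Rightarrow> 'a" where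
  "trunc K v = (\<lambda>i. if i < K then v i else 0)"

definition linear_code :: "nat \<Rightarrow> (nat \<Rightarrow> 'a::field) set \<Rightarrow> bool" where
  "linear_code N C \<longleftrightarrow> C \<subseteq> vecs N \<and> (\<lambda>i. 0) \<in> C \<and>
     (\<forall>u\<in>C. \<forall>v\<in>C. (\<lambda>i. u i + v i) \<in> C) \<and>
     (\<forall>a. \<forall>v\<in>C. (\<lambda>i. a * v i) \<in> C)"

(* systematic linear (N,K)-code: every message of length K is the prefix of exactly
   one codeword (message symbols followed by N-K parity symbols); hence dimension K *)
definition systematic_code :: "nat \<Rightarrow> nat \<Rightarrow> (nat \<Rightarrow> 'a::field) set \<Rightarrow> bool" where
  "systematic_code N K C \<longleftrightarrow> linear_code N C \<and> K \<le> N \<and> bij_betw (trunc K) C (vecs K)"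

definition weight :: "nat \<Rightarrow> (nat \<Rightarrow> 'a::zero) \<Rightarrow> nat" where
  "weight N v = card {i. i < N \<and> v i \<noteq> 0}"

definition sys_MDS_code :: "nat \<Rightarrow> nat \<Rightarrow> (nat \<Rightarrow> 'a::field) set \<Rightarrow> bool" where
  "sys_MDS_code N K C \<longleftrightarrow> systematic_code N K C \<and>
     (\<forall>v\<in>C. v \<noteq> (\<lambda>i. 0) \<longrightarrow> N - K + 1 \<le> weight N v)"

definition stair_pos :: "nat \<Rightarrow> nat \<Rightarrow> nat \<Rightarrow> nat \<Rightarrow> (nat \<Rightarrow> nat) \<Rightarrow> (nat \<times> nat) set" where
  "stair_pos n r m m' e = {(i, j). \<exists>l. l < m' \<and> j = n - m - m' + l \<and> r - e l \<le> i \<and> i < r}"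

definition data_pos :: "nat \<Rightarrow> nat \<Rightarrow> nat \<Rightarrow> nat \<Rightarrow> (nat \<Rightarrow> nat) \<Rightarrow> (nat \<times> nat) set" where
  "data_pos n r m m' e = {(i, j). i < r \<and> j < n - m \<and> (i, j) \<notin> stair_pos n r m m' e}"

definition stair_code ::
  "nat \<Rightarrow> nat \<Rightarrow> nat \<Rightarrow> nat \<Rightarrow> (nat \<Rightarrow> nat) \<Rightarrow> (nat \<Rightarrow> 'a::field) set \<Rightarrow> (nat \<Rightarrow> 'a) set
     \<Rightarrow> (nat \<Rightarrow> nat \<Rightarrow> 'a) set" where
  "stair_code n r m m' e Crow Ccol =
    {X. (\<forall>i j. (r \<le> i \<or> n \<le> j) \<longrightarrow> X i j = 0) \<and>
        (\<exists>P'. (\<forall>i<r. (\<lambda>j. if j < n then X i j else if j < n + m' then P' i (j - n) else 0) \<in> Crow) \<and>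
              (\<forall>l<m'. \<exists>c\<in>Ccol. (\<forall>i<r. c i = P' i l) \<and> (\<forall>k<e l. c (r + k) = 0)))}"

definition par_height :: "nat \<Rightarrow> nat \<Rightarrow> nat \<Rightarrow> nat \<Rightarrow> (nat \<Rightarrow> nat) \<Rightarrow> nat \<Rightarrow> nat" where
  "par_height n r m m' e j =
     (if j < n - m - m' then 0 else if j < n - m then e (j - (n - m - m')) else r)"

definition row_par :: "nat \<Rightarrow> nat \<Rightarrow> nat \<Rightarrow> nat \<Rightarrow> (nat \<Rightarrow> nat) \<Rightarrow> nat \<Rightarrow> nat" where
  "row_par n r m m' e i = card {j. j < n \<and> r - i \<le> par_height n r m m' e j}"

end

theory Submission
  imports Defs "HOL-Library.FuncSet"
begin

(* A stair codeword X is the visible r x n part of an extended array R: an r x (n+m')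
   array whose rows are Crow-codewords and whose global parity column n+l has its first
   e l column-code parities equal to zero.  Encoding every column with the column code
   yields virtual parity rows; they are linear combinations of the rows, hence again
   Crow-codewords.  Using only the MDS property (a row codeword is determined by any
   n-m of its positions, a column codeword by any r) we show that an array whose data
   vanish in a suitable region vanishes: row by row from the top, stair column by stair
   column along a tread, and along a riser.  Conversely the data can be prescribed
   freely (the array is built row by row), so the coefficient c(a,b) is the parity entry
   of the codeword with a single unit data entry at (a,b); the three triangularity
   statements then follow from the three vanishing results. *)

lemma linear_code_add: "linear_code N C \<Longrightarrow> u \<in> C \<Longrightarrow> v \<in> C \<Longrightarrow> (\<lambda>i. u i + v i) \<in> C"
  unfolding linear_code_def by blast

lemma linear_code_smult: "linear_code N C \<Longrightarrow> v \<in> C \<Longrightarrow> (\<lambda>i. a * v i) \<in> C"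
  unfolding linear_code_def by blast

lemma linear_code_diff:
  assumes "linear_code N C" "u \<in> C" "v \<in> C"
  shows "(\<lambda>i. u i - v i) \<in> C"
  using linear_code_add[OF assms(1,2) linear_code_smult[OF assms(1,3), of "-1"]] by simp

lemma linear_code_lincomb:
  assumes C: "linear_code N C" and "finite I" and "\<And>i. i \<in> I \<Longrightarrow> f i \<in> C"
  shows "(\<lambda>t. \<Sum>i\<in>I. a i * f i t) \<in> C"
  using assms(2,3)
proof (induction I rule: finite_induct)
  case empty
  then show ?case using C unfolding linear_code_def by simp
next
  case (insert x F)
  have "(\<lambda>t. a x * f x t + (\<Sum>i\<in>F. a i * f i t)) \<in> C"
    using insert linear_code_add[OF C linear_code_smult[OF C]] by simp
  then show ?case using insert by simp
qed

lemma sys_MDS_linear: "sys_MDS_code N K C \<Longrightarrow> linear_code N C"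
  unfolding sys_MDS_code_def systematic_code_def by auto

(* A nonzero codeword of an MDS (N,K)-code has weight at least N-K+1, so it cannot
   vanish on K positions. *)
lemma mds_zero:
  assumes "sys_MDS_code N K C" "v \<in> C" "P \<subseteq> {..<N}" "K \<le> card P" "\<forall>p\<in>P. v p = 0"
  shows "v = (\<lambda>i. 0)"
proof (rule ccontr)
  assume ne: "v \<noteq> (\<lambda>i. 0)"
  have KN: "K \<le> N" and w: "N - K + 1 \<le> weight N v"
    using assms(1,2) ne unfolding sys_MDS_code_def systematic_code_def by blast+
  have "{i. i<N \<and> v i \<noteq> 0} \<subseteq> {..<N} - P" using assms(5) by auto
  hence "weight N v \<le> card ({..<N} - P)" unfolding weight_def by (intro card_mono) auto
  also have "\<dots> = N - card P" using assms(3) by (simp add: card_Diff_subset finite_subset)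
  finally have "weight N v \<le> N - card P" .
  moreover have "card P \<le> N" using card_mono[OF finite_lessThan assms(3)] by simp
  ultimately show False using w assms(4) KN by linarith
qed

lemma mds_unique:
  assumes "sys_MDS_code N K C" "u \<in> C" "v \<in> C" "P \<subseteq> {..<N}" "K \<le> card P"
    and "\<forall>p\<in>P. u p = v p"
  shows "u = v"
proof -
  have "(\<lambda>i. u i - v i) = (\<lambda>i. 0)"
    using mds_zero[OF assms(1) linear_code_diff[OF sys_MDS_linear[OF assms(1)] assms(2,3)]
        assms(4,5)] assms(6) by simp
  then show ?thesis by (simp add: fun_eq_iff)
qed

lemma vecs_restrict_bij:
  "bij_betw (\<lambda>v. restrict v {..<K}) (vecs K :: (nat \<Rightarrow> 'a::zero) set) (Pi\<^sub>E {..<K} (\<lambda>_. UNIV))"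
proof (rule bij_betw_byWitness[where f'="\<lambda>g i. if i < K then g i else 0"])
  show "\<forall>v\<in>vecs K. (\<lambda>i. if i < K then restrict v {..<K} i else 0) = (v :: nat \<Rightarrow> 'a)"
    unfolding vecs_def by (intro ballI ext) (simp add: not_less)
  show "\<forall>g\<in>Pi\<^sub>E {..<K} (\<lambda>_. UNIV). restrict (\<lambda>i. if i < K then g i else (0::'a)) {..<K} = g"
  proof (intro ballI ext)
    fix g :: "nat \<Rightarrow> 'a" and i assume "g \<in> Pi\<^sub>E {..<K} (\<lambda>_. UNIV)"
    then show "restrict (\<lambda>i. if i < K then g i else 0) {..<K} i = g i"
      by (cases "i < K") (simp_all add: PiE_def extensional_def)
  qed
  show "(\<lambda>v. restrict v {..<K}) ` (vecs K :: (nat \<Rightarrow> 'a) set) \<subseteq> Pi\<^sub>E {..<K} (\<lambda>_. UNIV)"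
    by (rule image_subsetI) simp
  show "(\<lambda>g i. if i < K then g i else 0) ` Pi\<^sub>E {..<K} (\<lambda>_. UNIV) \<subseteq> (vecs K :: (nat \<Rightarrow> 'a) set)"
    unfolding vecs_def image_subset_iff by simp
qed

(* Over a finite field any K positions of an MDS (N,K)-code form an information set:
   restriction to them is injective, and both sides have |F|^K elements. *)
lemma mds_information_set:
  fixes C :: "(nat \<Rightarrow> 'a::{field,finite}) set"
  assumes C: "sys_MDS_code N K C" and P: "P \<subseteq> {..<N}" "card P = K"
  shows "\<exists>v\<in>C. \<forall>p\<in>P. v p = f p"
proof -
  have "bij_betw (trunc K) C (vecs K)"
    using C unfolding sys_MDS_code_def systematic_code_def by auto
  then have "card C = card (vecs K :: (nat \<Rightarrow> 'a) set)" by (rule bij_betw_same_card)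
  also have "\<dots> = card (Pi\<^sub>E {..<K} (\<lambda>_. UNIV :: 'a set))"
    by (rule bij_betw_same_card[OF vecs_restrict_bij])
  finally have cardC: "card C = card (UNIV::'a set) ^ K" by (simp add: card_PiE)
  have finP: "finite P" using P(1) finite_subset by blast
  have inj: "inj_on (\<lambda>v. restrict v P) C"
  proof (rule inj_onI)
    fix u v assume uv: "u \<in> C" "v \<in> C" "restrict u P = restrict v P"
    then have "\<forall>p\<in>P. u p = v p" by (metis restrict_apply)
    then show "u = v" using mds_unique[OF C uv(1,2) P(1)] P(2) by simp
  qed
  have sub: "(\<lambda>v. restrict v P) ` C \<subseteq> Pi\<^sub>E P (\<lambda>_. UNIV)" by auto
  have "card ((\<lambda>v. restrict v P) ` C) = card (Pi\<^sub>E P (\<lambda>_. UNIV :: 'a set))"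
    using card_image[OF inj] cardC by (simp add: card_PiE finP P(2))
  then have onto: "(\<lambda>v. restrict v P) ` C = Pi\<^sub>E P (\<lambda>_. UNIV)"
    using card_subset_eq[OF finite_PiE[OF finP] sub] by simp
  have "restrict f P \<in> Pi\<^sub>E P (\<lambda>_. UNIV)" by simp
  then obtain v where v: "v \<in> C" "restrict v P = restrict f P" using onto by (metis imageE)
  have "v p = f p" if "p \<in> P" for p using fun_cong[OF v(2), of p] that by simp
  then show ?thesis using v(1) by blast
qed

locale stair =
  fixes n r m m' :: nat and e :: "nat \<Rightarrow> nat" and Crow Ccol :: "(nat \<Rightarrow> 'a::{field,finite}) set"
  assumes m'_pos: "1 \<le> m'" and m'_le: "m' \<le> n - m"
    and e_mono: "\<And>l1 l2. l1 \<le> l2 \<Longrightarrow> l2 < m' \<Longrightarrow> e l1 \<le> e l2"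
    and e_le: "e (m' - 1) \<le> r"
    and Crow: "sys_MDS_code (n + m') (n - m) Crow"
    and Ccol: "sys_MDS_code (r + e (m' - 1)) r Ccol"
begin

abbreviation "D \<equiv> data_pos n r m m' e"
abbreviation "s0 \<equiv> n - m - m'"

lemma mm_le: "m + m' \<le> n" using m'_le m'_pos by arith

lemma e_le_max: "l < m' \<Longrightarrow> e l \<le> e (m' - 1)" using e_mono[of l "m' - 1"] by simp

lemma e_le_r: "l < m' \<Longrightarrow> e l \<le> r" using e_le_max e_le by (meson le_trans)

lemma D_iff: "(i, j) \<in> D \<longleftrightarrow> i < r \<and> j < n - m \<and> \<not> (\<exists>l<m'. j = s0 + l \<and> r - e l \<le> i)"
  unfolding data_pos_def stair_pos_def by blast

lemma D_bounds: "(i, j) \<in> D \<Longrightarrow> i < r \<and> j < n"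
  unfolding D_iff by auto

lemma D_stair_col:
  assumes "l < m'" "i < r - e l"
  shows "(i, s0 + l) \<in> D"
proof -
  have "\<not> (\<exists>l'<m'. s0 + l = s0 + l' \<and> r - e l' \<le> i)" using assms(2) by auto
  then show ?thesis unfolding D_iff using assms mm_le by auto
qed

lemma D_pure_col: "j < s0 \<Longrightarrow> i < r \<Longrightarrow> (i, j) \<in> D"
  unfolding D_iff using m'_le by auto

lemma D_finite: "finite D"
  by (rule finite_subset[of _ "{..<r} \<times> {..<n}"]) (auto simp: D_iff)

definition active :: "nat \<Rightarrow> nat set" where
  "active t = {l. l < m' \<and> r - e l \<le> t}"

(* Information set of row t of the extended r x (n+m') array: its data positions
   together with the active global parity columns; it has exactly n-m elements. *)
definition row_info :: "nat \<Rightarrow> nat set" where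
  "row_info t = {j. (t, j) \<in> D} \<union> (\<lambda>l. n + l) ` active t"

lemma row_info_sub: "row_info t \<subseteq> {..<n + m'}"
  unfolding row_info_def active_def D_iff by auto

lemma card_row_info:
  assumes t: "t < r"
  shows "card (row_info t) = n - m"
proof -
  have finA: "finite (active t)" unfolding active_def by simp
  have cA: "card (active t) \<le> m'"
    using card_mono[OF finite_lessThan, of "active t" m'] unfolding active_def by auto
  have row: "{j. (t, j) \<in> D} = {..<n - m} - (\<lambda>l. s0 + l) ` active t"
    unfolding D_iff active_def using t by auto
  have "(\<lambda>l. s0 + l) ` active t \<subseteq> {..<n - m}" unfolding active_def using m'_le by auto
  then have "card {j. (t, j) \<in> D} = n - m - card (active t)"
    unfolding row by (simp add: card_Diff_subset finA card_image)
  moreover have "card (row_info t) = card {j. (t, j) \<in> D} + card ((\<lambda>l. n + l) ` active t)"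
    unfolding row_info_def by (rule card_Un_disjoint) (auto simp: row finA)
  ultimately show ?thesis using cA m'_le by (simp add: card_image)
qed

(* Information set of global parity column l inside the column code: the r - e l
   unconstrained top rows together with the e l parity rows forced to zero. *)
definition col_info :: "nat \<Rightarrow> nat set" where
  "col_info l = {..<r - e l} \<union> (\<lambda>k. r + k) ` {..<e l}"

lemma col_info_sub: "l < m' \<Longrightarrow> col_info l \<subseteq> {..<r + e (m' - 1)}"
  using e_le_max[of l] unfolding col_info_def by auto

lemma card_col_info:
  assumes "l < m'"
  shows "card (col_info l) = r"
proof -
  have "card (col_info l) = card {..<r - e l} + card ((\<lambda>k. r + k) ` {..<e l})"
    unfolding col_info_def by (rule card_Un_disjoint) auto
  also have "\<dots> = r - e l + e l" by (simp add: card_image)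
  finally show ?thesis using e_le_r[OF assms] by simp
qed

lemma Crow_vanish: "v \<in> Crow \<Longrightarrow> n + m' \<le> j \<Longrightarrow> v j = 0"
  using sys_MDS_linear[OF Crow] unfolding linear_code_def vecs_def by blast

definition unit_col :: "nat \<Rightarrow> nat \<Rightarrow> 'a" where
  "unit_col i = (SOME v. v \<in> Ccol \<and> (\<forall>t<r. v t = (if t = i then 1 else 0)))"

lemma unit_col: "unit_col i \<in> Ccol" "t < r \<Longrightarrow> unit_col i t = (if t = i then 1 else 0)"
proof -
  have "\<exists>v\<in>Ccol. \<forall>t\<in>{..<r}. v t = (if t = i then 1 else 0)"
    by (rule mds_information_set[OF Ccol]) simp_all
  then obtain v where "v \<in> Ccol \<and> (\<forall>t<r. v t = (if t = i then 1 else 0))" by auto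
  then have "unit_col i \<in> Ccol \<and> (\<forall>t<r. unit_col i t = (if t = i then 1 else 0))"
    unfolding unit_col_def
    by (rule someI[where P="\<lambda>v. v \<in> Ccol \<and> (\<forall>t<r. v t = (if t = i then 1 else 0))"])
  then show "unit_col i \<in> Ccol" "t < r \<Longrightarrow> unit_col i t = (if t = i then 1 else 0)" by auto
qed

definition encode_col :: "(nat \<Rightarrow> 'a) \<Rightarrow> nat \<Rightarrow> 'a" where
  "encode_col x = (\<lambda>t. \<Sum>i<r. x i * unit_col i t)"

lemma encode_col_in: "encode_col x \<in> Ccol"
  unfolding encode_col_def
  by (rule linear_code_lincomb[OF sys_MDS_linear[OF Ccol]]) (auto intro: unit_col)

lemma encode_col_top:
  assumes "t < r"
  shows "encode_col x t = x t"
proof -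
  have "(\<Sum>i<r. x i * unit_col i t) = (\<Sum>i<r. if i = t then x i else 0)"
    by (rule sum.cong) (auto simp: unit_col assms)
  then show ?thesis unfolding encode_col_def using assms by simp
qed

lemma encode_col_eq:
  assumes "c \<in> Ccol" "\<forall>t<r. c t = x t"
  shows "c = encode_col x"
  by (rule mds_unique[OF Ccol assms(1) encode_col_in, of "{..<r}"])
    (auto simp: assms(2) encode_col_top)

(* Column MDS property: a column whose top r - e l entries and first e l encoding
   parities vanish is zero (these r positions form the information set col_info l). *)
lemma encode_col_zero:
  assumes l: "l < m'" and top: "\<forall>t<r - e l. x t = 0" and bot: "\<forall>k<e l. encode_col x (r + k) = 0"
  shows "\<forall>t<r. x t = 0"
proof -
  have "\<forall>p\<in>col_info l. encode_col x p = 0"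
    using top bot encode_col_top unfolding col_info_def by auto
  then have "encode_col x = (\<lambda>_. 0)"
    using mds_zero[OF Ccol encode_col_in col_info_sub[OF l]] card_col_info[OF l] by simp
  then show ?thesis using encode_col_top by (metis)
qed

(* Extended arrays of stair codewords: the r x (n+m') array carrying the global parity
   symbols in columns n, ..., n+m'-1.  Every row lies in Crow, and the first e l
   column-code parities of global parity column l vanish. *)
definition stair_array :: "(nat \<Rightarrow> nat \<Rightarrow> 'a) \<Rightarrow> bool" where
  "stair_array R \<longleftrightarrow> (\<forall>i<r. R i \<in> Crow) \<and>
     (\<forall>l<m'. \<forall>k<e l. encode_col (\<lambda>i. R i (n + l)) (r + k) = 0)"

lemma stair_array_row: "stair_array R \<Longrightarrow> i < r \<Longrightarrow> R i \<in> Crow"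
  unfolding stair_array_def by blast

lemma stair_array_col:
  "stair_array R \<Longrightarrow> l < m' \<Longrightarrow> k < e l \<Longrightarrow> encode_col (\<lambda>i. R i (n + l)) (r + k) = 0"
  unfolding stair_array_def by blast

(* The k-th virtual parity row: the k-th column-code parity of every column.  As a
   linear combination of the rows it is again a row codeword. *)
definition parity_row :: "(nat \<Rightarrow> nat \<Rightarrow> 'a) \<Rightarrow> nat \<Rightarrow> nat \<Rightarrow> 'a" where
  "parity_row R k = (\<lambda>j. \<Sum>i<r. unit_col i (r + k) * R i j)"

lemma parity_row_col: "parity_row R k j = encode_col (\<lambda>i. R i j) (r + k)"
  unfolding parity_row_def encode_col_def by (simp add: mult.commute)

lemma parity_row_in: "stair_array R \<Longrightarrow> parity_row R k \<in> Crow"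
  unfolding parity_row_def
  by (rule linear_code_lincomb[OF sys_MDS_linear[OF Crow]]) (auto intro: stair_array_row)

lemma array_row_zero:
  assumes R: "stair_array R" and t: "t < r" and data: "\<forall>j. (t, j) \<in> D \<longrightarrow> R t j = 0"
    and above: "\<forall>l\<in>active t. \<forall>k<r - e l. R k (n + l) = 0"
  shows "R t = (\<lambda>_. 0)"
proof -
  have "R t (n + l) = 0" if l: "l \<in> active t" for l
  proof -
    have "l < m'" using l unfolding active_def by simp
    then have "\<forall>i<r. R i (n + l) = 0"
      using encode_col_zero[of l "\<lambda>i. R i (n + l)"] above l stair_array_col[OF R] by blast
    then show ?thesis using t by simp
  qed
  then have "\<forall>p\<in>row_info t. R t p = 0" using data unfolding row_info_def by auto
  then show ?thesis
    using mds_zero[OF Crow stair_array_row[OF R t] row_info_sub[of t]] card_row_info[OF t] by simp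
qed

lemma array_rows_zero:
  assumes R: "stair_array R" and t: "t \<le> r" and data: "\<forall>i j. (i, j) \<in> D \<longrightarrow> i < t \<longrightarrow> R i j = 0"
  shows "\<forall>i<t. R i = (\<lambda>_. 0)"
proof (intro allI impI)
  fix i assume "i < t"
  then show "R i = (\<lambda>_. 0)"
  proof (induction i rule: less_induct)
    case (less i)
    have "\<forall>l\<in>active i. \<forall>k<r - e l. R k (n + l) = 0"
    proof (intro ballI allI impI)
      fix l k assume "l \<in> active i" "k < r - e l"
      then have "k < i" unfolding active_def by auto
      then show "R k (n + l) = 0" using less by simp
    qed
    then show ?case using array_row_zero[OF R] less.prems t data by simp
  qed
qed

(* If the columns left of stair column l1 vanish, so do the first e l1 parity rows:
   they are row codewords vanishing on these s0 + l1 columns and on the m' - l1 global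
   parity columns l \<ge> l1, i.e. on n - m positions. *)
lemma parity_rows_zero:
  assumes R: "stair_array R" and l1: "l1 < m'" and left: "\<forall>j<s0 + l1. \<forall>i<r. R i j = 0"
    and k: "k < e l1"
  shows "parity_row R k = (\<lambda>_. 0)"
proof -
  define P where "P = {..<s0 + l1} \<union> (\<lambda>l. n + l) ` {l1..<m'}"
  have Psub: "P \<subseteq> {..<n + m'}" unfolding P_def using mm_le l1 by auto
  have "card P = card {..<s0 + l1} + card ((\<lambda>l. n + l) ` {l1..<m'})"
    unfolding P_def by (rule card_Un_disjoint) (use mm_le l1 in auto)
  also have "\<dots> = n - m" using mm_le l1 by (simp add: card_image)
  finally have cP: "card P = n - m" .
  have "parity_row R k p = 0" if p: "p \<in> P" for p
  proof (cases "p < s0 + l1")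
    case True then show ?thesis unfolding parity_row_def using left by simp
  next
    case False
    then obtain l where l: "l \<in> {l1..<m'}" "p = n + l" using p unfolding P_def by blast
    have "e l1 \<le> e l" using e_mono l by simp
    then show ?thesis using stair_array_col[OF R] k l parity_row_col by simp
  qed
  then show ?thesis using mds_zero[OF Crow parity_row_in[OF R] Psub] cP by simp
qed

lemma stair_col_zero:
  assumes l: "l < m'" and top: "\<forall>i<r - e l. R i (s0 + l) = 0"
    and bot: "\<forall>k<e l. parity_row R k (s0 + l) = 0"
  shows "\<forall>i<r. R i (s0 + l) = 0"
  using encode_col_zero[OF l] top bot parity_row_col by simp

lemma array_cols_zero:
  assumes R: "stair_array R" and l1: "l1 \<le> m'"
    and data: "\<forall>i j. (i, j) \<in> D \<longrightarrow> j < s0 + l1 \<longrightarrow> R i j = 0"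
  shows "\<forall>j<s0 + l1. \<forall>i<r. R i j = 0"
proof (intro allI impI)
  fix j i assume "j < s0 + l1" "i < r"
  then show "R i j = 0"
  proof (induction j arbitrary: i rule: less_induct)
    case (less j)
    show ?case
    proof (cases "j < s0")
      case True then show ?thesis using data D_pure_col less.prems by blast
    next
      case False
      define l where "l = j - s0"
      have j: "j = s0 + l" and l: "l < m'" using False less.prems l1 unfolding l_def by linarith+
      have "\<forall>j'<s0 + l. \<forall>i<r. R i j' = 0" using less.IH less.prems j by auto
      then have "\<forall>k<e l. parity_row R k (s0 + l) = 0" using parity_rows_zero[OF R l] by simp
      moreover have "\<forall>i<r - e l. R i (s0 + l) = 0" using data D_stair_col[OF l] j less.prems by auto
      ultimately show ?thesis using stair_col_zero[OF l] j less.prems by blast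
    qed
  qed
qed

lemma array_tread_zero:
  assumes R: "stair_array R" and l: "l1 \<le> l0" "l0 < m'" "e l0 \<le> e l1"
    and data: "\<forall>i j. (i, j) \<in> D \<longrightarrow> (j < s0 + l1 \<or> j = s0 + l0) \<longrightarrow> R i j = 0"
  shows "\<forall>i<r. R i (s0 + l0) = 0"
proof -
  have left: "\<forall>j<s0 + l1. \<forall>i<r. R i j = 0"
    by (rule array_cols_zero[OF R]) (use l data in auto)
  have "\<forall>k<e l0. parity_row R k (s0 + l0) = 0"
    using parity_rows_zero[OF R _ left] l by simp
  moreover have "\<forall>i<r - e l0. R i (s0 + l0) = 0" using data D_stair_col[OF l(2)] by auto
  ultimately show ?thesis using stair_col_zero[OF l(2)] by blast
qed

lemma stair_code_array:
  assumes "X \<in> stair_code n r m m' e Crow Ccol"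
  obtains R where "stair_array R" "\<forall>i j. j < n \<longrightarrow> R i j = X i j"
proof -
  obtain P' where rows: "\<forall>i<r. (\<lambda>j. if j < n then X i j else if j < n + m' then P' i (j - n) else 0) \<in> Crow"
    and cols: "\<forall>l<m'. \<exists>c\<in>Ccol. (\<forall>i<r. c i = P' i l) \<and> (\<forall>k<e l. c (r + k) = 0)"
    using assms unfolding stair_code_def by blast
  define R where "R i = (\<lambda>j. if j < n then X i j else if j < n + m' then P' i (j - n) else 0)" for i
  have "stair_array R"
    unfolding stair_array_def
  proof (intro conjI allI impI)
    fix i assume "i < r"
    then show "R i \<in> Crow" using rows unfolding R_def by blast
  next
    fix l k assume l: "l < m'" and k: "k < e l"
    obtain c where c: "c \<in> Ccol" "\<forall>i<r. c i = P' i l" "\<forall>k<e l. c (r + k) = 0"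
      using cols l by blast
    have "c = encode_col (\<lambda>i. R i (n + l))"
      by (rule encode_col_eq[OF c(1)]) (use c(2) l in \<open>simp add: R_def\<close>)
    then show "encode_col (\<lambda>i. R i (n + l)) (r + k) = 0" using c(3) k by simp
  qed
  then show ?thesis by (rule that) (simp add: R_def)
qed

lemma array_stair_code:
  assumes R: "stair_array R"
  shows "(\<lambda>i j. if i < r \<and> j < n then R i j else 0) \<in> stair_code n r m m' e Crow Ccol"
proof -
  define X where "X = (\<lambda>i j. if i < r \<and> j < n then R i j else 0)"
  define P' where "P' = (\<lambda>i l. R i (n + l))"
  have rows: "(\<lambda>j. if j < n then X i j else if j < n + m' then P' i (j - n) else 0) \<in> Crow"
    if i: "i < r" for i
  proof -
    have "(\<lambda>j. if j < n then X i j else if j < n + m' then P' i (j - n) else 0) = R i"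
      using Crow_vanish[OF stair_array_row[OF R i]] i unfolding X_def P'_def by (auto simp: fun_eq_iff)
    then show ?thesis using stair_array_row[OF R i] by simp
  qed
  have cols: "\<exists>c\<in>Ccol. (\<forall>i<r. c i = P' i l) \<and> (\<forall>k<e l. c (r + k) = 0)" if l: "l < m'" for l
    using encode_col_top stair_array_col[OF R l] unfolding P'_def
    by (intro bexI[OF _ encode_col_in[of "\<lambda>i. R i (n + l)"]]) simp
  have zero: "\<forall>i j. (r \<le> i \<or> n \<le> j) \<longrightarrow> X i j = 0" unfolding X_def by auto
  have "X \<in> stair_code n r m m' e Crow Ccol"
    unfolding stair_code_def using zero rows cols by blast
  then show ?thesis unfolding X_def .
qed

definition col_fill :: "nat \<Rightarrow> (nat \<Rightarrow> 'a) \<Rightarrow> nat \<Rightarrow> 'a" where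
  "col_fill l x = (SOME c. c \<in> Ccol \<and> (\<forall>t<r - e l. c t = x t) \<and> (\<forall>k<e l. c (r + k) = 0))"

lemma col_fill:
  assumes l: "l < m'"
  shows "col_fill l x \<in> Ccol" "\<forall>t<r - e l. col_fill l x t = x t" "\<forall>k<e l. col_fill l x (r + k) = 0"
proof -
  obtain c where c: "c \<in> Ccol" "\<forall>p\<in>col_info l. c p = (if p < r - e l then x p else 0)"
    using mds_information_set[OF Ccol col_info_sub[OF l] card_col_info[OF l],
        of "\<lambda>p. if p < r - e l then x p else 0"] by blast
  then have "c \<in> Ccol \<and> (\<forall>t<r - e l. c t = x t) \<and> (\<forall>k<e l. c (r + k) = 0)"
    unfolding col_info_def by auto
  then have "col_fill l x \<in> Ccol \<and> (\<forall>t<r - e l. col_fill l x t = x t) \<and> (\<forall>k<e l. col_fill l x (r + k) = 0)"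
    unfolding col_fill_def
    by (rule someI[where P="\<lambda>c. c \<in> Ccol \<and> (\<forall>t<r - e l. c t = x t) \<and> (\<forall>k<e l. c (r + k) = 0)"])
  then show "col_fill l x \<in> Ccol" "\<forall>t<r - e l. col_fill l x t = x t" "\<forall>k<e l. col_fill l x (r + k) = 0"
    by auto
qed

lemma col_fill_cong:
  assumes "\<forall>t<r - e l. x t = y t"
  shows "col_fill l x = col_fill l y"
proof -
  have "(\<forall>t<r - e l. c t = x t) \<longleftrightarrow> (\<forall>t<r - e l. c t = y t)" for c using assms by auto
  then show ?thesis unfolding col_fill_def by simp
qed

(* Row i of a partially built array is consistent with the data d: it is a row codeword
   carrying the data of row i, and its active global parities are the column completions
   determined by the rows above. *)
definition consistent_row :: "(nat \<times> nat \<Rightarrow> 'a) \<Rightarrow> (nat \<Rightarrow> nat \<Rightarrow> 'a) \<Rightarrow> nat \<Rightarrow> bool" where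
  "consistent_row d R i \<longleftrightarrow> R i \<in> Crow \<and> (\<forall>j. (i, j) \<in> D \<longrightarrow> R i j = d (i, j)) \<and>
     (\<forall>l\<in>active i. R i (n + l) = col_fill l (\<lambda>k. R k (n + l)) i)"

(* Encoding proceeds top-down: row t is interpolated on its information set. *)
lemma consistent_rows_exist: "t \<le> r \<Longrightarrow> \<exists>R. \<forall>i<t. consistent_row d R i"
proof (induction t)
  case 0 show ?case by simp
next
  case (Suc t)
  then obtain R where R: "\<forall>i<t. consistent_row d R i" by auto
  have t: "t < r" using Suc.prems by simp
  define f where "f j = (if j < n then d (t, j) else col_fill (j - n) (\<lambda>k. R k j) t)" for j
  obtain v where v: "v \<in> Crow" "\<forall>j\<in>row_info t. v j = f j"
    using mds_information_set[OF Crow row_info_sub card_row_info[OF t], of f] by blast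
  define R' where "R' = R(t := v)"
  have fill: "col_fill l (\<lambda>k. R' k (n + l)) = col_fill l (\<lambda>k. R k (n + l))"
    if "l \<in> active i" "i \<le> t" for l i
    by (rule col_fill_cong) (use that in \<open>auto simp: R'_def active_def\<close>)
  have "consistent_row d R' i" if i: "i < Suc t" for i
  proof (cases "i = t")
    case True
    have "(t, j) \<in> D \<Longrightarrow> v j = d (t, j)" for j
      using v(2) D_bounds[of t j] unfolding row_info_def f_def by auto
    moreover have "l \<in> active t \<Longrightarrow> v (n + l) = col_fill l (\<lambda>k. R k (n + l)) t" for l
      using v(2) unfolding row_info_def f_def by auto
    ultimately show ?thesis using v(1) fill True unfolding consistent_row_def R'_def by auto
  next
    case False
    then have "consistent_row d R i" "R' i = R i" using R i unfolding R'_def by auto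
    then show ?thesis using fill i False unfolding consistent_row_def by auto
  qed
  then show ?case by blast
qed

lemma array_with_data: "\<exists>R. stair_array R \<and> (\<forall>i j. (i, j) \<in> D \<longrightarrow> R i j = d (i, j))"
proof -
  obtain R where R: "\<forall>i<r. consistent_row d R i" using consistent_rows_exist by blast
  have "encode_col (\<lambda>i. R i (n + l)) (r + k) = 0" if l: "l < m'" and k: "k < e l" for l k
  proof -
    have "\<forall>t<r. col_fill l (\<lambda>i. R i (n + l)) t = R t (n + l)"
    proof (intro allI impI)
      fix t assume t: "t < r"
      show "col_fill l (\<lambda>i. R i (n + l)) t = R t (n + l)"
      proof (cases "t < r - e l")
        case True then show ?thesis using col_fill(2)[OF l] by simp
      next
        case False
        then have "l \<in> active t" using l unfolding active_def by simp
        then show ?thesis using R t unfolding consistent_row_def by simp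
      qed
    qed
    then have "col_fill l (\<lambda>i. R i (n + l)) = encode_col (\<lambda>i. R i (n + l))"
      by (rule encode_col_eq[OF col_fill(1)[OF l]])
    then show ?thesis using col_fill(3)[OF l] k by metis
  qed
  then have "stair_array R" using R unfolding stair_array_def consistent_row_def by blast
  moreover have "\<forall>i j. (i, j) \<in> D \<longrightarrow> R i j = d (i, j)"
    using R D_bounds unfolding consistent_row_def by blast
  ultimately show ?thesis by blast
qed

lemma code_with_data: "\<exists>X\<in>stair_code n r m m' e Crow Ccol. \<forall>i j. (i, j) \<in> D \<longrightarrow> X i j = d (i, j)"
proof -
  obtain R where R: "stair_array R" "\<forall>i j. (i, j) \<in> D \<longrightarrow> R i j = d (i, j)"
    using array_with_data by blast
  show ?thesis
  proof (rule bexI[OF _ array_stair_code[OF R(1)]], intro allI impI)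
    fix i j assume ij: "(i, j) \<in> D"
    then have "i < r" "j < n" using D_bounds[OF ij] by auto
    then show "(if i < r \<and> j < n then R i j else 0) = d (i, j)" using R(2) ij by simp
  qed
qed

lemma code_rows_zero:
  assumes X: "X \<in> stair_code n r m m' e Crow Ccol" and t: "t \<le> r"
    and data: "\<forall>i j. (i, j) \<in> D \<longrightarrow> i < t \<longrightarrow> X i j = 0" and ij: "i < t" "j < n"
  shows "X i j = 0"
proof -
  obtain R where R: "stair_array R" "\<forall>i j. j < n \<longrightarrow> R i j = X i j"
    using stair_code_array[OF X] by blast
  have "\<forall>i j. (i, j) \<in> D \<longrightarrow> i < t \<longrightarrow> R i j = 0" using data R(2) D_bounds by simp
  then have "R i = (\<lambda>_. 0)" using array_rows_zero[OF R(1) t] ij(1) by blast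
  then show ?thesis using R(2) ij(2) by metis
qed

lemma code_tread_zero:
  assumes X: "X \<in> stair_code n r m m' e Crow Ccol" and l: "l1 \<le> l0" "l0 < m'" "e l0 \<le> e l1"
    and data: "\<forall>i j. (i, j) \<in> D \<longrightarrow> (j < s0 + l1 \<or> j = s0 + l0) \<longrightarrow> X i j = 0" and i: "i < r"
  shows "X i (s0 + l0) = 0"
proof -
  obtain R where R: "stair_array R" "\<forall>i j. j < n \<longrightarrow> R i j = X i j"
    using stair_code_array[OF X] by blast
  have "\<forall>i j. (i, j) \<in> D \<longrightarrow> (j < s0 + l1 \<or> j = s0 + l0) \<longrightarrow> R i j = 0"
    using data R(2) D_bounds by simp
  then have "R i (s0 + l0) = 0" using array_tread_zero[OF R(1) l] i by simp
  moreover have "s0 + l0 < n" using l mm_le by linarith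
  ultimately show ?thesis using R(2) by simp
qed

lemma par_height_pure: "j < s0 \<Longrightarrow> par_height n r m m' e j = 0"
  unfolding par_height_def by simp

lemma par_height_stair: "l < m' \<Longrightarrow> par_height n r m m' e (s0 + l) = e l"
  unfolding par_height_def using mm_le by auto

lemma par_height_global:
  assumes "n - m \<le> j"
  shows "par_height n r m m' e j = r"
proof -
  have "\<not> j < s0" "\<not> j < n - m" using assms by linarith+
  then show ?thesis unfolding par_height_def by simp
qed

(* Data columns are lower than r: a stair column of full height carries no data. *)
lemma par_height_data:
  assumes ab: "(a, b) \<in> D"
  shows "par_height n r m m' e b < r"
proof (cases "b < s0")
  case True then show ?thesis using par_height_pure D_bounds[OF ab] by simp
next
  case False
  define l where "l = b - s0"
  have b: "b = s0 + l" and l: "l < m'" using False ab unfolding l_def D_iff by auto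
  have "a < r - e l" using ab b l unfolding D_iff by auto
  then show ?thesis using par_height_stair[OF l] b by simp
qed

lemma same_riser:
  assumes "a < i0" "row_par n r m m' e a = row_par n r m m' e i0" "l \<in> active i0"
  shows "l \<in> active a"
proof -
  define A where "A t = {j. j < n \<and> r - t \<le> par_height n r m m' e j}" for t
  have "A a \<subseteq> A i0" unfolding A_def using assms(1) by auto
  moreover have "card (A a) = card (A i0)" using assms(2) unfolding A_def row_par_def by simp
  ultimately have eq: "A a = A i0" using card_subset_eq[of "A i0" "A a"] unfolding A_def by simp
  have l: "l < m'" "r - e l \<le> i0" using assms(3) unfolding active_def by auto
  have h: "par_height n r m m' e (s0 + l) = e l" by (rule par_height_stair[OF l(1)])
  have "s0 + l < n" "r - i0 \<le> e l" using l mm_le by linarith+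
  then have "s0 + l \<in> A a" using eq h unfolding A_def by simp
  then have "r - a \<le> e l" using h unfolding A_def by simp
  then show ?thesis using l unfolding active_def by auto
qed

lemma code_riser_zero:
  assumes X: "X \<in> stair_code n r m m' e Crow Ccol" and a: "a < i0" "i0 < r"
    and rp: "row_par n r m m' e a = row_par n r m m' e i0"
    and data: "\<forall>i j. (i, j) \<in> D \<longrightarrow> i \<noteq> a \<longrightarrow> X i j = 0" and j: "j < n"
  shows "X i0 j = 0"
proof -
  obtain R where R: "stair_array R" "\<forall>i j. j < n \<longrightarrow> R i j = X i j"
    using stair_code_array[OF X] by blast
  have dataR: "\<forall>i j. (i, j) \<in> D \<longrightarrow> i \<noteq> a \<longrightarrow> R i j = 0" using data R(2) D_bounds by simp
  then have above: "\<forall>i<a. R i = (\<lambda>_. 0)" using array_rows_zero[OF R(1), of a] a by auto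
  have "\<forall>l\<in>active i0. \<forall>k<r - e l. R k (n + l) = 0"
  proof (intro ballI allI impI)
    fix l k assume "l \<in> active i0" "k < r - e l"
    then have "k < a" using same_riser[OF a(1) rp] unfolding active_def by fastforce
    then show "R k (n + l) = 0" using above by simp
  qed
  then have "R i0 = (\<lambda>_. 0)" using array_row_zero[OF R(1) a(2)] dataR a(1) by simp
  then show ?thesis using R(2) j by metis
qed

end

locale stair_functional = stair n r m m' e Crow Ccol
  for n r m m' :: nat and e :: "nat \<Rightarrow> nat" and Crow Ccol :: "(nat \<Rightarrow> 'a::{field,finite}) set" +
  fixes i0 j0 :: nat and c :: "nat \<times> nat \<Rightarrow> 'a"
  assumes i0: "i0 < r" and j0: "j0 < n"
    and parity_pos: "(i0, j0) \<in> stair_pos n r m m' e \<or> n - m \<le> j0"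
    and repr: "\<forall>X \<in> stair_code n r m m' e Crow Ccol.
                 X i0 j0 = (\<Sum>(i, j) \<in> data_pos n r m m' e. c (i, j) * X i j)"
begin

lemma coeff_response:
  assumes ab: "(a, b) \<in> D"
  obtains X where "X \<in> stair_code n r m m' e Crow Ccol"
    "\<forall>i j. (i, j) \<in> D \<longrightarrow> X i j = (if (i, j) = (a, b) then 1 else 0)" "c (a, b) = X i0 j0"
proof -
  obtain X where X: "X \<in> stair_code n r m m' e Crow Ccol"
    and Xd: "\<forall>i j. (i, j) \<in> D \<longrightarrow> X i j = (if (i, j) = (a, b) then 1 else 0)"
    using code_with_data[of "\<lambda>q. if q = (a, b) then 1 else 0"] by auto
  have "X i0 j0 = (\<Sum>(i, j)\<in>D. c (i, j) * X i j)" using repr X by blast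
  also have "\<dots> = (\<Sum>q\<in>D. if q = (a, b) then c q else 0)"
  proof (rule sum.cong[OF refl])
    fix q assume "q \<in> D"
    then show "(case q of (i, j) \<Rightarrow> c (i, j) * X i j) = (if q = (a, b) then c q else 0)"
      using Xd by (cases q) simp
  qed
  also have "\<dots> = c (a, b)" using D_finite ab by simp
  finally show ?thesis using that X Xd by simp
qed

lemma coeff_below_zero:
  assumes ab: "(a, b) \<in> D" and lt: "i0 < a"
  shows "c (a, b) = 0"
proof -
  obtain X where X: "X \<in> stair_code n r m m' e Crow Ccol"
    and Xd: "\<forall>i j. (i, j) \<in> D \<longrightarrow> X i j = (if (i, j) = (a, b) then 1 else 0)"
    and cX: "c (a, b) = X i0 j0" using coeff_response[OF ab] by blast
  have "X i0 j0 = 0" by (rule code_rows_zero[OF X, of "Suc i0"]) (use Xd lt i0 j0 in auto)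
  then show ?thesis using cX by simp
qed

lemma j0_stair: "j0 < n - m \<Longrightarrow> \<exists>l0<m'. j0 = s0 + l0 \<and> r - e l0 \<le> i0"
  using parity_pos unfolding stair_pos_def by auto

lemma coeff_right_zero:
  assumes ab: "(a, b) \<in> D" and lt: "j0 < b"
  shows "c (a, b) = 0"
proof -
  obtain X where X: "X \<in> stair_code n r m m' e Crow Ccol"
    and Xd: "\<forall>i j. (i, j) \<in> D \<longrightarrow> X i j = (if (i, j) = (a, b) then 1 else 0)"
    and cX: "c (a, b) = X i0 j0" using coeff_response[OF ab] by blast
  have "b < n - m" using ab unfolding D_iff by simp
  then obtain l0 where l0: "l0 < m'" "j0 = s0 + l0" using j0_stair lt by auto
  have "X i0 (s0 + l0) = 0"
    by (rule code_tread_zero[OF X order.refl l0(1) order.refl]) (use Xd lt l0(2) i0 in auto)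
  then show ?thesis using cX l0 by simp
qed

lemma tread_partner:
  assumes e_pos: "0 < e 0" and ab: "(a, b) \<in> D" and lt: "b < j0"
    and ph: "par_height n r m m' e b = par_height n r m m' e j0"
  obtains l l0 where "l < l0" "l0 < m'" "b = s0 + l" "j0 = s0 + l0" "e l0 = e l"
proof -
  have "j0 < n - m"
    using par_height_data[OF ab] ph par_height_global[of j0] by (metis less_irrefl not_le)
  then obtain l0 where l0: "l0 < m'" "j0 = s0 + l0" using j0_stair by auto
  have "0 < e l0" using e_pos e_mono[of 0 l0] l0(1) by simp
  then have ge: "\<not> b < s0" using ph par_height_pure par_height_stair[OF l0(1)] l0(2) by fastforce
  then have b: "b = s0 + (b - s0)" by simp
  moreover have "b - s0 < l0" using lt l0(2) ge by linarith
  moreover have "e l0 = e (b - s0)"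
    using ph par_height_stair l0 b \<open>b - s0 < l0\<close> by (metis less_trans)
  ultimately show ?thesis using that l0 by blast
qed

lemma coeff_tread_zero:
  assumes e_pos: "0 < e 0" and ab: "(a, b) \<in> D" and ne: "b \<noteq> j0"
    and ph: "par_height n r m m' e b = par_height n r m m' e j0"
  shows "c (a, b) = 0"
proof (cases "j0 < b")
  case True then show ?thesis using coeff_right_zero ab by blast
next
  case False
  then have "b < j0" using ne by simp
  then obtain l l0 where l: "l < l0" "l0 < m'" "b = s0 + l" "j0 = s0 + l0" "e l0 = e l"
    using tread_partner[OF e_pos ab _ ph] by blast
  obtain X where X: "X \<in> stair_code n r m m' e Crow Ccol"
    and Xd: "\<forall>i j. (i, j) \<in> D \<longrightarrow> X i j = (if (i, j) = (a, b) then 1 else 0)"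
    and cX: "c (a, b) = X i0 j0" using coeff_response[OF ab] by blast
  have "X i0 (s0 + l0) = 0"
    by (rule code_tread_zero[OF X less_imp_le[OF l(1)] l(2)]) (use Xd l ne i0 in auto)
  then show ?thesis using cX l by simp
qed

lemma coeff_riser_zero:
  assumes ab: "(a, b) \<in> D" and ne: "a \<noteq> i0"
    and rp: "row_par n r m m' e a = row_par n r m m' e i0"
  shows "c (a, b) = 0"
proof (cases "i0 < a")
  case True then show ?thesis using coeff_below_zero ab by blast
next
  case False
  then have "a < i0" using ne by simp
  obtain X where X: "X \<in> stair_code n r m m' e Crow Ccol"
    and Xd: "\<forall>i j. (i, j) \<in> D \<longrightarrow> X i j = (if (i, j) = (a, b) then 1 else 0)"
    and cX: "c (a, b) = X i0 j0" using coeff_response[OF ab] by blast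
  have "X i0 j0 = 0" by (rule code_riser_zero[OF X \<open>a < i0\<close> i0 rp _ j0]) (use Xd in auto)
  then show ?thesis using cX by simp
qed

end

theorem mainTheorem4:
  fixes n r m m' w i0 j0 :: nat
    and e :: "nat \<Rightarrow> nat"
    and Crow Ccol :: "(nat \<Rightarrow> 'a::{field,finite}) set"
    and c :: "nat \<times> nat \<Rightarrow> 'a"
  assumes "1 \<le> m" and "m < n" and "1 \<le> m'" and "m' \<le> n - m"
    and "0 < e 0"
    and "\<And>l1 l2. l1 \<le> l2 \<Longrightarrow> l2 < m' \<Longrightarrow> e l1 \<le> e l2"
    and "e (m' - 1) \<le> r"
    and "card (UNIV :: 'a set) = 2 ^ w"
    and "n + m' \<le> 2 ^ w" and "r + e (m' - 1) \<le> 2 ^ w"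
    and "sys_MDS_code (n + m') (n - m) Crow"
    and "sys_MDS_code (r + e (m' - 1)) r Ccol"
    and "i0 < r" and "j0 < n"
    and "(i0, j0) \<in> stair_pos n r m m' e \<or> n - m \<le> j0"
    and "\<forall>X \<in> stair_code n r m m' e Crow Ccol.
           X i0 j0 = (\<Sum>(i, j) \<in> data_pos n r m m' e. c (i, j) * X i j)"
  shows "(\<forall>(i, j) \<in> data_pos n r m m' e. c (i, j) \<noteq> 0 \<longrightarrow> i \<le> i0 \<and> j \<le> j0)
       \<and> (\<forall>(i, j) \<in> data_pos n r m m' e.
            j \<noteq> j0 \<and> par_height n r m m' e j = par_height n r m m' e j0 \<longrightarrow> c (i, j) = 0)
       \<and> (\<forall>(i, j) \<in> data_pos n r m m' e.
            i \<noteq> i0 \<and> row_par n r m m' e i = row_par n r m m' e i0 \<longrightarrow> c (i, j) = 0)"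
proof -
  interpret stair_functional n r m m' e Crow Ccol i0 j0 c
    by unfold_locales (fact assms)+
  have "c (i, j) = 0" if "(i, j) \<in> D" "\<not> (i \<le> i0 \<and> j \<le> j0)" for i j
    using that coeff_below_zero coeff_right_zero by (meson not_le)
  moreover have "c (i, j) = 0" if "(i, j) \<in> D" "j \<noteq> j0"
    "par_height n r m m' e j = par_height n r m m' e j0" for i j
    using that coeff_tread_zero[OF assms(5)] by blast
  moreover have "c (i, j) = 0" if "(i, j) \<in> D" "i \<noteq> i0"
    "row_par n r m m' e i = row_par n r m m' e i0" for i j
    using that coeff_riser_zero by blast
  ultimately show ?thesis by blast
qed

end
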